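(* Against an oblivious adversary in the ASYNC$_{IC}$ model (arbitrary wait times $\mathcal{W}\ge 0$, zero computation delay $\mathcal{C}=0$), if the algorithm knows the ratio $\alpha$ of the speeds of the two robots, then it is possible to gather the two robots: there is a randomized algorithm such that, for every choice of wait times by the adversary, the robots gather with positive probability.
   Context: Two robots are anonymous, oblivious (no memory of past cycles), silent (no communication) points in the Euclidean plane with no common coordinate system, each having access to random bits; each robot moves at its own constant speed, and $\alpha>0$ denotes the ratio of their speeds (a robot cannot tell whether it is the faster or slower one). Each robot repeatedly executes a cycle in which it stays still for a while, then moves: the look instant (when it obtains a snapshot of the other robot's current position, which may be in motion) splits the stationary period into a wait time $\mathcal{W}$ (before the look) and a computation delay $\mathcal{C}$ (after the look). It then moves to a destination computed from the snapshot and its random bits, reaching it in the same cycle (rigid movement). A robot that looks and finds the other robot at its own position decides it has gathered and never moves again; gathering means both robots are at the same point. The scheduler is an adversary choosing the wait times and computation delays of every cycle of each robot; an oblivious adversary knows the algorithm but not the outcomes of random bits, so it fixes all these sequences before the execution. ASYNC$_{IC}$ is the asynchronous model with all computation delays equal to $0$. *)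

theory Defs
  imports "HOL-Probability.Probability"
begin

text \<open>Robots are indexed by bool; the other robot of i is (\<not> i).
  Positions are points of the plane, represented as complex numbers.\<close>

text \<open>Local coordinate systems: arbitrary similarities of the plane
  (origin, orientation, unit length and chirality all unknown).\<close>
definition similarity :: "(complex \<Rightarrow> complex) \<Rightarrow> bool" where
  "similarity f \<longleftrightarrow> (\<exists>a b. a \<noteq> 0 \<and>
      (f = (\<lambda>z. a * z + b) \<or> f = (\<lambda>z. a * cnj z + b)))"

text \<open>Position of a robot at the start of its k-th cycle, given its initial
  position and the sequence of destinations D (rigid movement).\<close>
fun startpos :: "complex \<Rightarrow> (nat \<Rightarrow> complex) \<Rightarrow> nat \<Rightarrow> complex" where
  "startpos x0 D 0 = x0"
| "startpos x0 D (Suc k) = D k"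

text \<open>Start time of the k-th cycle: wait W k, look (computation delay 0),
  then move to D k at speed v.\<close>
fun cstart :: "(nat \<Rightarrow> real) \<Rightarrow> real \<Rightarrow> complex \<Rightarrow> (nat \<Rightarrow> complex) \<Rightarrow> nat \<Rightarrow> real" where
  "cstart W v x0 D 0 = 0"
| "cstart W v x0 D (Suc k) =
     cstart W v x0 D k + W k + cmod (D k - startpos x0 D k) / v"

definition look_time :: "(nat \<Rightarrow> real) \<Rightarrow> real \<Rightarrow> complex \<Rightarrow> (nat \<Rightarrow> complex) \<Rightarrow> nat \<Rightarrow> real" where
  "look_time W v x0 D k = cstart W v x0 D k + W k"

text \<open>An algorithm maps (own position in local coordinates, observed position of
  the other robot in local coordinates, fresh random bits) to a destination in
  local coordinates.  The random bits of robot i in cycle k are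
  (\<lambda>n. \<omega> (i,k,n)).

  exec_prefix alg fr v W x0 \<omega> H P D: P (positions over time) and D (destinations)
  form the execution on the time interval [0,H).  A robot that, at a look, sees the
  other robot at its own position stops forever.\<close>
definition exec_prefix ::
  "(complex \<Rightarrow> complex \<Rightarrow> (nat \<Rightarrow> bool) \<Rightarrow> complex) \<Rightarrow> (bool \<Rightarrow> complex \<Rightarrow> complex) \<Rightarrow>
   (bool \<Rightarrow> real) \<Rightarrow> (bool \<Rightarrow> nat \<Rightarrow> real) \<Rightarrow> (bool \<Rightarrow> complex) \<Rightarrow>
   (bool \<times> nat \<times> nat \<Rightarrow> bool) \<Rightarrow> real \<Rightarrow> (bool \<Rightarrow> real \<Rightarrow> complex) \<Rightarrow>
   (bool \<Rightarrow> nat \<Rightarrow> complex) \<Rightarrow> bool" where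
  "exec_prefix alg fr v W x0 \<omega> H P D \<longleftrightarrow>
    (\<forall>i. let X = startpos (x0 i) (D i);
             S = cstart (W i) (v i) (x0 i) (D i);
             L = look_time (W i) (v i) (x0 i) (D i);
             sees = (\<lambda>k. P i (L k) = P (\<not> i) (L k));
             active = (\<lambda>k. \<forall>k'<k. \<not> sees k')
         in (\<forall>k. active k \<longrightarrow>
                 (\<forall>t. S k \<le> t \<and> t \<le> L k \<and> t < H \<longrightarrow> P i t = X k))
          \<and> (\<forall>k. active k \<and> L k < H \<and> sees k \<longrightarrow>
                 (\<forall>t. L k \<le> t \<and> t < H \<longrightarrow> P i t = X k))
          \<and> (\<forall>k. active k \<and> L k < H \<and> \<not> sees k \<longrightarrow>
                 D i k = inv (fr i) (alg (fr i (X k)) (fr i (P (\<not> i) (L k))) (\<lambda>n. \<omega> (i, k, n)))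
               \<and> (\<forall>t. L k \<le> t \<and> t \<le> S (Suc k) \<and> t < H \<longrightarrow>
                      P i t = X k + of_real ((t - L k) * v i) * sgn (D i k - X k)))
          \<and> ((\<exists>k. active k \<and> L k < H \<and> sees k) \<or> (\<exists>k. H \<le> S k)))"

text \<open>Gathering: in some finite prefix of the execution both robots have looked and
  found the other robot at their own position (hence both stay forever at the same
  point).\<close>
definition gathers ::
  "(complex \<Rightarrow> complex \<Rightarrow> (nat \<Rightarrow> bool) \<Rightarrow> complex) \<Rightarrow> (bool \<Rightarrow> complex \<Rightarrow> complex) \<Rightarrow>
   (bool \<Rightarrow> real) \<Rightarrow> (bool \<Rightarrow> nat \<Rightarrow> real) \<Rightarrow> (bool \<Rightarrow> complex) \<Rightarrow>
   (bool \<times> nat \<times> nat \<Rightarrow> bool) \<Rightarrow> bool" where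
  "gathers alg fr v W x0 \<omega> \<longleftrightarrow>
    (\<exists>H P D. exec_prefix alg fr v W x0 \<omega> H P D \<and>
      (\<forall>i. \<exists>k. let L = look_time (W i) (v i) (x0 i) (D i) in
           (\<forall>k'<k. P i (L k') \<noteq> P (\<not> i) (L k')) \<and> L k < H \<and> P i (L k) = P (\<not> i) (L k)))"

definition coin_space :: "(bool \<times> nat \<times> nat \<Rightarrow> bool) measure" where
  "coin_space = PiM UNIV (\<lambda>_. measure_pmf (bernoulli_pmf (1/2)))"

end

theory Submission
  imports Defs
begin

text \<open>
  All motion happens on the line through the two initial positions: a robot moves to
  own + c (other - own) with a coefficient c drawn from a countable set that contains 0, 1,
  the speed shares 1/(1+\<alpha>) and \<alpha>/(1+\<alpha>), and all non-negative dyadic rationals. Every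
  finite sequence of coefficient choices has positive probability, so for fixed wait times it
  suffices to exhibit one finite run that gathers. Place the robot A that looks first at 0 and
  B at 1, and let T be the time at which A would reach 1. If B, resting at 1, still looks at
  some time after T, A walks to 1 and B waits for it. Otherwise the looks of a resting B
  accumulate before T. If B ever looks immediately after arriving somewhere, B walks towards A
  with coefficient wB/(wA+wB), so that it looks exactly when the two meet, and A later returns
  to that point. If B always waits, A overshoots the meeting point by a small dyadic amount;
  then either A comes back while B is still waiting there, or, when A's second wait outlasts
  all waits of B, B follows A to its new position.
\<close>

fun cycle_origin :: "'a \<Rightarrow> (nat \<Rightarrow> 'a) \<Rightarrow> nat \<Rightarrow> 'a" where
  "cycle_origin x0 D 0 = x0"
| "cycle_origin x0 D (Suc k) = D k"

fun cycle_start ::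
  "(nat \<Rightarrow> real) \<Rightarrow> real \<Rightarrow> 'a::real_normed_vector \<Rightarrow> (nat \<Rightarrow> 'a) \<Rightarrow> nat \<Rightarrow> real"
where
  "cycle_start W v x0 D 0 = 0"
| "cycle_start W v x0 D (Suc k) =
     cycle_start W v x0 D k + W k + norm (D k - cycle_origin x0 D k) / v"

definition cycle_look ::
  "(nat \<Rightarrow> real) \<Rightarrow> real \<Rightarrow> 'a::real_normed_vector \<Rightarrow> (nat \<Rightarrow> 'a) \<Rightarrow> nat \<Rightarrow> real"
where
  "cycle_look W v x0 D k = cycle_start W v x0 D k + W k"

text \<open>The robot performs its first K moves and then stays put.\<close>

fun trajectory ::
  "(nat \<Rightarrow> real) \<Rightarrow> real \<Rightarrow> 'a::real_normed_vector \<Rightarrow> (nat \<Rightarrow> 'a) \<Rightarrow> nat \<Rightarrow> real \<Rightarrow> 'a"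
where
  "trajectory W v x0 D 0 t = x0"
| "trajectory W v x0 D (Suc K) t =
     (if t \<le> cycle_look W v x0 D K then trajectory W v x0 D K t
      else if t \<le> cycle_start W v x0 D (Suc K)
      then cycle_origin x0 D K + ((t - cycle_look W v x0 D K) * v) *\<^sub>R sgn (D K - cycle_origin x0 D K)
      else D K)"

declare trajectory.simps(2) [simp del]

lemma startpos_eq_cycle_origin: "startpos = cycle_origin"
proof (intro ext)
  show "startpos x0 D k = cycle_origin x0 D k" for x0 D k by (cases k) simp_all
qed

lemma cstart_eq_cycle_start: "cstart = cycle_start"
proof (intro ext)
  show "cstart W v x0 D k = cycle_start W v x0 D k" for W v x0 D k
    by (induction k) (simp_all add: startpos_eq_cycle_origin)
qed

lemma look_time_eq_cycle_look: "look_time = cycle_look"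
  by (intro ext) (simp add: look_time_def cycle_look_def cstart_eq_cycle_start)

locale motion =
  fixes W :: "nat \<Rightarrow> real" and v :: real
  assumes W_nonneg: "\<And>k. W k \<ge> 0" and v_pos: "v > 0"
begin

lemma cycle_start_le_look: "cycle_start W v x0 D k \<le> cycle_look W v x0 D k"
  using W_nonneg by (simp add: cycle_look_def)

lemma cycle_look_le_start_Suc: "cycle_look W v x0 D k \<le> cycle_start W v x0 D (Suc k)"
  using v_pos by (simp add: cycle_look_def)

lemma cycle_look_mono: "k \<le> k' \<Longrightarrow> cycle_look W v x0 D k \<le> cycle_look W v x0 D k'"
  by (rule lift_Suc_mono_le[of "cycle_look W v x0 D"]) (use cycle_look_le_start_Suc cycle_start_le_look order_trans in blast)

lemma destination_eq_origin: "cycle_start W v x0 D (Suc k) = cycle_look W v x0 D k \<Longrightarrow> D k = cycle_origin x0 D k"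
  using v_pos by (simp add: cycle_look_def)

lemma trajectory_settled: "cycle_start W v x0 D K \<le> t \<Longrightarrow> trajectory W v x0 D K t = cycle_origin x0 D K"
proof (induction K)
  case (Suc K)
  show ?case
  proof (cases "t \<le> cycle_look W v x0 D K")
    case True
    then have "cycle_start W v x0 D (Suc K) = cycle_look W v x0 D K"
      using Suc.prems cycle_look_le_start_Suc[of x0 D K] by linarith
    then have "D K = cycle_origin x0 D K" by (rule destination_eq_origin)
    moreover have "trajectory W v x0 D K t = cycle_origin x0 D K"
      using Suc.IH Suc.prems \<open>cycle_start W v x0 D (Suc K) = cycle_look W v x0 D K\<close> cycle_start_le_look[of x0 D K] by simp
    ultimately show ?thesis using True by (simp add: trajectory.simps(2))
  next
    case False
    have "norm (D K - cycle_origin x0 D K) / v * v = norm (D K - cycle_origin x0 D K)" using v_pos by simp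
    then have "cycle_origin x0 D K + (norm (D K - cycle_origin x0 D K) / v * v) *\<^sub>R sgn (D K - cycle_origin x0 D K) = D K"
      by (cases "D K = cycle_origin x0 D K") (simp_all add: sgn_div_norm)
    with False Suc.prems show ?thesis by (auto simp: cycle_look_def trajectory.simps(2))
  qed
qed simp

lemma trajectory_prefix:
  "k \<le> K \<Longrightarrow> t \<le> cycle_look W v x0 D k \<Longrightarrow> trajectory W v x0 D K t = trajectory W v x0 D k t"
proof (induction K)
  case (Suc K)
  show ?case
  proof (cases "k = Suc K")
    case False
    then have "t \<le> cycle_look W v x0 D K" using Suc.prems cycle_look_mono[of k K x0 D] by simp
    with False Suc show ?thesis by (simp add: trajectory.simps(2))
  qed simp
qed simp

lemma trajectory_waiting:
  assumes "k \<le> K" "cycle_start W v x0 D k \<le> t" "t \<le> cycle_look W v x0 D k"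
  shows "trajectory W v x0 D K t = cycle_origin x0 D k"
  using trajectory_prefix[OF assms(1,3)] trajectory_settled[OF assms(2)] by simp

lemma trajectory_moving:
  assumes "k < K" "cycle_look W v x0 D k \<le> t" "t \<le> cycle_start W v x0 D (Suc k)"
  shows "trajectory W v x0 D K t = cycle_origin x0 D k + ((t - cycle_look W v x0 D k) * v) *\<^sub>R sgn (D k - cycle_origin x0 D k)"
proof -
  have "trajectory W v x0 D K t = trajectory W v x0 D (Suc k) t"
    using assms cycle_start_le_look[of x0 D "Suc k"] by (intro trajectory_prefix) auto
  also have "\<dots> = cycle_origin x0 D k + ((t - cycle_look W v x0 D k) * v) *\<^sub>R sgn (D k - cycle_origin x0 D k)"
    using assms trajectory_settled[of x0 D k t] cycle_start_le_look[of x0 D k] by (auto simp: trajectory.simps(2))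
  finally show ?thesis .
qed

lemma trajectory_after_look: "cycle_look W v x0 D K \<le> t \<Longrightarrow> trajectory W v x0 D K t = cycle_origin x0 D K"
  using cycle_start_le_look trajectory_settled order_trans by blast

lemma trajectory_resting:
  assumes rest: "\<And>k. m \<le> k \<Longrightarrow> k < K \<Longrightarrow> D k = cycle_origin x0 D m"
    and "m \<le> K" and "cycle_start W v x0 D m \<le> t"
  shows "trajectory W v x0 D K t = cycle_origin x0 D m"
proof -
  have origin: "cycle_origin x0 D k = cycle_origin x0 D m" if "m \<le> k" "k \<le> K" for k
  proof (cases "k = m")
    case False
    with that obtain j where "k = Suc j" "m \<le> j" by (cases k) auto
    then show ?thesis using rest[of j] that by simp
  qed simp
  have "trajectory W v x0 D K' t = cycle_origin x0 D m" if "m \<le> K'" "K' \<le> K" for K'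
    using that
  proof (induction K')
    case (Suc K')
    show ?case
    proof (cases "m = Suc K'")
      case True
      then show ?thesis using trajectory_settled[OF assms(3)] by simp
    next
      case False
      then have "m \<le> K'" "K' < K" using Suc.prems by auto
      then have "trajectory W v x0 D K' t = cycle_origin x0 D m" using Suc.IH by simp
      then show ?thesis
        unfolding trajectory.simps(2) origin[OF \<open>m \<le> K'\<close> less_imp_le[OF \<open>K' < K\<close>]]
          rest[OF \<open>m \<le> K'\<close> \<open>K' < K\<close>]
        by simp
    qed
  qed simp
  then show ?thesis using \<open>m \<le> K\<close> by simp
qed

end

lemma cycle_origin_cong: "(\<And>m. m < k \<Longrightarrow> D m = D' m) \<Longrightarrow> cycle_origin x0 D k = cycle_origin x0 D' k"
  by (cases k) simp_all

lemma cycle_start_cong: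
  "(\<And>m. m < k \<Longrightarrow> D m = D' m) \<Longrightarrow> cycle_start W v x0 D k = cycle_start W v x0 D' k"
proof (induction k)
  case (Suc k)
  then show ?case using cycle_origin_cong[of k D D' x0] by simp
qed simp

lemma cycle_look_cong:
  "(\<And>m. m < k \<Longrightarrow> D m = D' m) \<Longrightarrow> cycle_look W v x0 D k = cycle_look W v x0 D' k"
  using cycle_start_cong[of k D D'] by (simp add: cycle_look_def)

lemma cycle_look_Suc_of_resting:
  "D k = cycle_origin x0 D k \<Longrightarrow> cycle_look W v x0 D (Suc k) = cycle_look W v x0 D k + W (Suc k)"
  by (simp add: cycle_look_def)

lemma cycle_origin_const: "cycle_origin x (\<lambda>_. x) k = x"
  by (cases k) simp_all

lemma trajectory_const: "trajectory W v x (\<lambda>_. x) K t = x"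
  by (induction K) (simp_all add: cycle_origin_const trajectory.simps(2))

definition meeting_run ::
  "real set \<Rightarrow> (nat \<Rightarrow> real) \<Rightarrow> real \<Rightarrow> 'a::real_normed_vector \<Rightarrow> (nat \<Rightarrow> 'a) \<Rightarrow> nat \<Rightarrow>
    (real \<Rightarrow> 'a) \<Rightarrow> bool"
where
  "meeting_run C W v x0 D K Q \<longleftrightarrow>
     (\<forall>k<K. trajectory W v x0 D K (cycle_look W v x0 D k) \<noteq> Q (cycle_look W v x0 D k)) \<and>
     trajectory W v x0 D K (cycle_look W v x0 D K) = Q (cycle_look W v x0 D K) \<and>
     (\<forall>k<K. \<exists>c\<in>C. D k = cycle_origin x0 D k + c *\<^sub>R (Q (cycle_look W v x0 D k) - cycle_origin x0 D k))"

lemma meeting_runI: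
  assumes "\<And>k. k < K \<Longrightarrow> trajectory W v x0 D K (cycle_look W v x0 D k) \<noteq> Q (cycle_look W v x0 D k)"
    and "trajectory W v x0 D K (cycle_look W v x0 D K) = Q (cycle_look W v x0 D K)"
    and "\<And>k. k < K \<Longrightarrow>
           \<exists>c\<in>C. D k = cycle_origin x0 D k + c *\<^sub>R (Q (cycle_look W v x0 D k) - cycle_origin x0 D k)"
  shows "meeting_run C W v x0 D K Q"
  using assms unfolding meeting_run_def by blast

lemma meeting_run_2I:
  fixes W :: "nat \<Rightarrow> real" and v :: real and x0 :: "'a::real_normed_vector" and D :: "nat \<Rightarrow> 'a"
  defines "\<rho> \<equiv> trajectory W v x0 D 2" and "L \<equiv> cycle_look W v x0 D" and "X \<equiv> cycle_origin x0 D"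
  assumes "\<rho> (L 0) \<noteq> Q (L 0)" and "\<rho> (L 1) \<noteq> Q (L 1)" and "\<rho> (L 2) = Q (L 2)"
    and "\<exists>c\<in>C. D 0 = X 0 + c *\<^sub>R (Q (L 0) - X 0)" and "\<exists>c\<in>C. D 1 = X 1 + c *\<^sub>R (Q (L 1) - X 1)"
  shows "meeting_run C W v x0 D 2 Q"
  using assms unfolding meeting_run_def by (auto simp: less_2_cases_iff)

definition coef :: "real \<Rightarrow> nat \<Rightarrow> real" where
  "coef \<alpha> n = (if n = 0 then 1 / (1 + \<alpha>) else if n = 1 then \<alpha> / (1 + \<alpha>)
     else real (fst (prod_decode (n - 2))) / 2 ^ snd (prod_decode (n - 2)))"

lemma coef_dyadic: "coef \<alpha> (prod_encode (p, q) + 2) = real p / 2 ^ q"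
  by (simp add: coef_def)

lemma zero_in_coefs: "0 \<in> range (coef \<alpha>)"
  using coef_dyadic[of \<alpha> 0 0] by (metis div_0 of_nat_0 rangeI)

lemma one_in_coefs: "1 \<in> range (coef \<alpha>)"
  using coef_dyadic[of \<alpha> 1 0] by (metis div_by_1 of_nat_1 power_0 rangeI)

lemma coefs_dense:
  assumes "0 \<le> x" "x < y"
  shows "\<exists>c\<in>range (coef \<alpha>). x < c \<and> c < y"
proof -
  obtain q :: nat where q: "1 / (y - x) < 2 ^ q"
    using real_arch_pow[of 2 "1 / (y - x)"] by auto
  define p where "p = nat \<lfloor>x * 2 ^ q\<rfloor> + 1"
  have "x * 2 ^ q < real p" "real p \<le> x * 2 ^ q + 1"
    unfolding p_def using assms(1) by (simp_all add: of_nat_nat) linarith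
  moreover have "1 < (y - x) * 2 ^ q" using q assms(2) by (simp add: field_simps)
  ultimately have "x < real p / 2 ^ q" "real p / 2 ^ q < y"
    by (simp_all add: field_simps)
  then show ?thesis using coef_dyadic[of \<alpha> p q] by (metis rangeI)
qed

lemma speed_share_in_coefs:
  assumes "\<alpha> > 0" "w > 0" "w' > 0" "w' = \<alpha> * w \<or> w = \<alpha> * w'"
  shows "w' / (w + w') \<in> range (coef \<alpha>)"
proof (cases "w' = \<alpha> * w")
  case True
  then have "w' / (w + w') = (\<alpha> * w) / ((1 + \<alpha>) * w)" by (simp add: algebra_simps)
  also have "\<dots> = coef \<alpha> 1" using assms by (simp add: coef_def)
  finally show ?thesis by (metis rangeI)
next
  case False
  then have "w' / (w + w') = (1 * w') / ((1 + \<alpha>) * w')" using assms by (simp add: algebra_simps)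
  also have "\<dots> = coef \<alpha> 0" using assms by (simp add: coef_def)
  finally show ?thesis by (metis rangeI)
qed

text \<open>Robot A starts at 0 and looks first, B starts at 1; speeds are measured in units of the
  initial distance.\<close>

locale line_instance =
  fixes \<alpha> wA wB :: real and WA WB :: "nat \<Rightarrow> real"
  assumes \<alpha>_pos: "\<alpha> > 0" and wA_pos: "wA > 0" and wB_pos: "wB > 0"
    and WA_nonneg: "\<And>k. WA k \<ge> 0" and WB_nonneg: "\<And>k. WB k \<ge> 0"
    and A_looks_first: "WA 0 \<le> WB 0"
    and speed_ratio: "wB = \<alpha> * wA \<or> wA = \<alpha> * wB"
begin

sublocale A: motion WA wA using WA_nonneg wA_pos by unfold_locales
sublocale B: motion WB wB using WB_nonneg wB_pos by unfold_locales

abbreviation "originA \<equiv> cycle_origin (0::real)"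
abbreviation "startA \<equiv> cycle_start WA wA (0::real)"
abbreviation "lookA \<equiv> cycle_look WA wA (0::real)"
abbreviation "pathA \<equiv> trajectory WA wA (0::real)"
abbreviation "originB \<equiv> cycle_origin (1::real)"
abbreviation "startB \<equiv> cycle_start WB wB (1::real)"
abbreviation "lookB \<equiv> cycle_look WB wB (1::real)"
abbreviation "pathB \<equiv> trajectory WB wB (1::real)"

definition gathers_on_line :: bool where
  "gathers_on_line \<longleftrightarrow> (\<exists>DA KA DB KB.
     meeting_run (range (coef \<alpha>)) WA wA 0 DA KA (pathB DB KB) \<and>
     meeting_run (range (coef \<alpha>)) WB wB 1 DB KB (pathA DA KA))"

definition tA :: real where "tA = WA 0"
definition tB :: real where "tB = WB 0"
definition T :: real where "T = tA + 1 / wA"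
definition \<sigma> :: "nat \<Rightarrow> real" where "\<sigma> = lookB (\<lambda>_. 1)"

lemma tA_nonneg: "0 \<le> tA"
  using WA_nonneg by (simp add: tA_def)

lemma tA_le_tB: "tA \<le> tB"
  using A_looks_first by (simp add: tA_def tB_def)

lemma lookA_0: "lookA DA 0 = tA"
  by (simp add: cycle_look_def tA_def)

lemma lookB_0: "lookB DB 0 = tB"
  by (simp add: cycle_look_def tB_def)

lemma startA_1: "startA DA 1 = tA + \<bar>DA 0\<bar> / wA"
  by (simp add: tA_def)

lemma pathA_initial: "0 \<le> t \<Longrightarrow> t \<le> tA \<Longrightarrow> pathA DA KA t = 0"
  using A.trajectory_waiting[of 0 KA 0 DA t] lookA_0 by simp

lemma pathB_initial: "0 \<le> t \<Longrightarrow> t \<le> tB \<Longrightarrow> pathB DB KB t = 1"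
  using B.trajectory_waiting[of 0 KB 1 DB t] lookB_0 by simp

lemma pathA_first_leg:
  assumes "0 < KA" "0 < DA 0" "tA \<le> t" "t \<le> tA + DA 0 / wA"
  shows "pathA DA KA t = (t - tA) * wA"
  using assms A.trajectory_moving[of 0 KA 0 DA t] lookA_0 startA_1 by simp

lemma pathA_below_one:
  assumes "0 < KA" "DA 0 = 1" "0 \<le> t" "t < T"
  shows "pathA DA KA t < 1"
proof (cases "t \<le> tA")
  case True
  then show ?thesis using assms pathA_initial by simp
next
  case False
  then have "pathA DA KA t = (t - tA) * wA"
    using assms by (intro pathA_first_leg) (simp_all add: T_def)
  also have "\<dots> < (T - tA) * wA" using assms wA_pos by simp
  finally show ?thesis using wA_pos by (simp add: T_def)
qed

lemma \<sigma>_0: "\<sigma> 0 = tB"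
  by (simp add: \<sigma>_def lookB_0)

lemma \<sigma>_Suc: "\<sigma> (Suc k) = \<sigma> k + WB (Suc k)"
  unfolding \<sigma>_def by (rule cycle_look_Suc_of_resting) (simp add: cycle_origin_const)

lemma \<sigma>_mono: "k \<le> k' \<Longrightarrow> \<sigma> k \<le> \<sigma> k'"
  unfolding \<sigma>_def by (rule B.cycle_look_mono)

lemma tB_le_\<sigma>: "tB \<le> \<sigma> k"
  using \<sigma>_mono[of 0 k] \<sigma>_0 by simp

lemma lookB_after_first_move: "lookB (\<lambda>_. r) (Suc k) = startB (\<lambda>_. r) 1 + (\<sigma> (Suc k) - tB)"
proof (induction k)
  case 0
  then show ?case using \<sigma>_Suc[of 0] \<sigma>_0 by (simp add: cycle_look_def)
next
  case (Suc k)
  have "lookB (\<lambda>_. r) (Suc (Suc k)) = lookB (\<lambda>_. r) (Suc k) + WB (Suc (Suc k))"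
    by (rule cycle_look_Suc_of_resting) simp
  then show ?case using Suc \<sigma>_Suc[of "Suc k"] by simp
qed

lemma pathB_after_first_move: "0 < K \<Longrightarrow> startB (\<lambda>_. r) 1 \<le> t \<Longrightarrow> pathB (\<lambda>_. r) K t = r"
  using B.trajectory_resting[of 1 K "\<lambda>_. r" 1 t] by simp

lemma gathers_on_line_if_B_waits_past_T:
  assumes "T \<le> \<sigma> j"
  shows gathers_on_line
proof -
  define j0 where "j0 = (LEAST j. T \<le> \<sigma> j)"
  have j0: "T \<le> \<sigma> j0" "\<And>k. k < j0 \<Longrightarrow> \<sigma> k < T"
    unfolding j0_def using assms by (auto intro: LeastI dest: not_less_Least)
  define DA :: "nat \<Rightarrow> real" where "DA = (\<lambda>_. 1)"
  have startA_1': "startA DA 1 = T" by (simp add: DA_def T_def tA_def)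
  have "meeting_run (range (coef \<alpha>)) WA wA 0 DA 1 (pathB (\<lambda>_. 1) j0)"
  proof (rule meeting_runI)
    show "pathA DA 1 (lookA DA k) \<noteq> pathB (\<lambda>_. 1) j0 (lookA DA k)" if "k < 1" for k
      using that pathA_initial[OF tA_nonneg] by (simp add: lookA_0 trajectory_const)
    show "pathA DA 1 (lookA DA 1) = pathB (\<lambda>_. 1) j0 (lookA DA 1)"
      using A.trajectory_after_look[of 0 DA 1 "lookA DA 1"] by (simp add: trajectory_const DA_def)
    show "\<exists>c\<in>range (coef \<alpha>). DA k = originA DA k + c *\<^sub>R (pathB (\<lambda>_. 1) j0 (lookA DA k) - originA DA k)"
      if "k < 1" for k
      using that one_in_coefs by (auto simp: trajectory_const DA_def)
  qed
  moreover have "meeting_run (range (coef \<alpha>)) WB wB 1 (\<lambda>_. 1) j0 (pathA DA 1)"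
  proof (rule meeting_runI)
    show "pathB (\<lambda>_. 1) j0 (lookB (\<lambda>_. 1) k) \<noteq> pathA DA 1 (lookB (\<lambda>_. 1) k)" if "k < j0" for k
      using pathA_below_one[of 1 DA "\<sigma> k"] j0(2)[OF that] tA_nonneg tA_le_tB tB_le_\<sigma>[of k]
      by (simp add: trajectory_const DA_def \<sigma>_def)
    show "pathB (\<lambda>_. 1) j0 (lookB (\<lambda>_. 1) j0) = pathA DA 1 (lookB (\<lambda>_. 1) j0)"
      using A.trajectory_settled[of 0 DA 1 "\<sigma> j0"] startA_1' j0(1)
      by (simp add: trajectory_const DA_def \<sigma>_def)
    show "\<exists>c\<in>range (coef \<alpha>).
        (1::real) = originB (\<lambda>_. 1) k + c *\<^sub>R (pathA DA 1 (lookB (\<lambda>_. 1) k) - originB (\<lambda>_. 1) k)"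
      for k
      by (rule bexI[of _ 0]) (simp_all add: cycle_origin_const zero_in_coefs)
  qed
  ultimately show ?thesis unfolding gathers_on_line_def by blast
qed

end

locale interception = line_instance +
  fixes l0 :: real
  assumes tA_le_l0: "tA \<le> l0" and l0_lt_T: "l0 < T"
begin

text \<open>While A heads from 0 towards a point beyond rm, it is at rp at time l0; if B leaves 1 at
  time l0 towards rm, the two meet exactly at rm at time \<tau>.\<close>

definition rp :: real where "rp = (l0 - tA) * wA"
definition \<kappa> :: real where "\<kappa> = wB / (wA + wB)"
definition rm :: real where "rm = 1 + \<kappa> * (rp - 1)"
definition \<tau> :: real where "\<tau> = l0 + (1 - rp) / (wA + wB)"

lemma rp_nonneg: "0 \<le> rp"
  using tA_le_l0 wA_pos by (simp add: rp_def)

lemma rp_lt_1: "rp < 1"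
proof -
  have "(l0 - tA) * wA < (T - tA) * wA" using l0_lt_T wA_pos by simp
  then show ?thesis using wA_pos by (simp add: rp_def T_def)
qed

lemma \<kappa>_in_coefs: "\<kappa> \<in> range (coef \<alpha>)"
  unfolding \<kappa>_def using speed_share_in_coefs \<alpha>_pos wA_pos wB_pos speed_ratio by blast

lemma \<kappa>_pos: "0 < \<kappa>" and \<kappa>_lt_1: "\<kappa> < 1"
  using wA_pos wB_pos by (simp_all add: \<kappa>_def)

lemma rp_lt_rm: "rp < rm"
proof -
  have "rm - rp = (1 - rp) * (1 - \<kappa>)" by (simp add: rm_def algebra_simps)
  moreover have "0 < (1 - rp) * (1 - \<kappa>)" using rp_lt_1 \<kappa>_lt_1 by simp
  ultimately show ?thesis by linarith
qed

lemma rm_lt_1: "rm < 1"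
  using \<kappa>_pos rp_lt_1 by (simp add: rm_def mult_pos_neg)

lemma rm_pos: "0 < rm"
  using rp_nonneg rp_lt_rm by simp

lemma l0_lt_\<tau>: "l0 < \<tau>"
  using rp_lt_1 wA_pos wB_pos by (simp add: \<tau>_def)

lemma A_reaches_rm_at_\<tau>: "(\<tau> - tA) * wA = rm"
proof -
  have "(\<tau> - tA) * wA = rp + (1 - rp) * wA / (wA + wB)"
    by (simp add: \<tau>_def rp_def algebra_simps add_divide_distrib)
  also have "(1 - rp) * wA / (wA + wB) = (1 - rp) * (1 - \<kappa>)"
    using wA_pos wB_pos by (simp add: \<kappa>_def field_simps)
  finally show ?thesis by (simp add: rm_def algebra_simps)
qed

lemma B_reaches_rm_at_\<tau>: "l0 + \<bar>rm - 1\<bar> / wB = \<tau>"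
proof -
  have "\<bar>rm - 1\<bar> = \<kappa> * (1 - rp)" using rm_lt_1 by (simp add: rm_def algebra_simps)
  then show ?thesis using wA_pos wB_pos by (simp add: \<tau>_def \<kappa>_def field_simps)
qed

lemma \<tau>_lt_T: "\<tau> < T"
proof -
  have "\<tau> = tA + rm / wA" using A_reaches_rm_at_\<tau> wA_pos by (simp add: field_simps)
  then show ?thesis using rm_lt_1 wA_pos by (simp add: T_def divide_strict_right_mono)
qed

lemma pathA_heading_past_rm:
  assumes "0 < KA" "rm \<le> DA 0" "tA \<le> t" "t \<le> \<tau>"
  shows "pathA DA KA t = (t - tA) * wA"
proof -
  have "(t - tA) * wA \<le> (\<tau> - tA) * wA"
    using assms(4) wA_pos by (intro mult_right_mono) auto
  then have "t - tA \<le> DA 0 / wA"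
    using assms(2) A_reaches_rm_at_\<tau> wA_pos by (simp add: pos_le_divide_eq)
  then show ?thesis using assms rm_pos by (intro pathA_first_leg) auto
qed

lemma pathA_at_l0: "0 < KA \<Longrightarrow> rm \<le> DA 0 \<Longrightarrow> pathA DA KA l0 = rp"
  using pathA_heading_past_rm tA_le_l0 l0_lt_\<tau> by (simp add: rp_def)

lemma pathA_at_\<tau>: "0 < KA \<Longrightarrow> rm \<le> DA 0 \<Longrightarrow> pathA DA KA \<tau> = rm"
  using pathA_heading_past_rm tA_le_l0 l0_lt_\<tau> A_reaches_rm_at_\<tau> by simp

lemma startB_after_interception:
  "lookB DB j = l0 \<Longrightarrow> originB DB j = 1 \<Longrightarrow> DB j = rm \<Longrightarrow> startB DB (Suc j) = \<tau>"
  using B_reaches_rm_at_\<tau> by (simp add: cycle_look_def)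


definition detour :: "nat \<Rightarrow> real" where "detour k = (if k = 0 then 1 else rm)"

lemma lookA_detour_1: "lookA detour 1 = T + WA 1"
  by (simp add: detour_def T_def tA_def cycle_look_def)

lemma lookA_detour_2: "lookA detour 2 = T + WA 1 + (1 - rm) / wA + WA 2"
  using rm_lt_1 by (simp add: numeral_2_eq_2 detour_def T_def tA_def cycle_look_def)

lemma pathA_detour_at_look_1: "pathA detour 2 (lookA detour 1) = 1"
  using A.trajectory_waiting[of 1 2 0 detour "lookA detour 1"] lookA_detour_1 WA_nonneg[of 1]
  by (simp add: detour_def T_def tA_def)

lemma pathA_detour_at_look_2: "pathA detour 2 (lookA detour 2) = rm"
  using A.trajectory_after_look[of 0 detour 2 "lookA detour 2"] by (simp add: numeral_2_eq_2 detour_def)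

end

locale overshoot = interception +
  fixes c :: real
  assumes rm_lt_c: "rm < c"
begin

definition s :: real where "s = (c - rm) / wA"

lemma s_pos: "0 < s"
  using rm_lt_c wA_pos by (simp add: s_def)

lemma arrival_at_c: "tA + c / wA = \<tau> + s"
  using A_reaches_rm_at_\<tau> wA_pos by (simp add: s_def field_simps)

lemma startA_1_overshoot: "DA 0 = c \<Longrightarrow> startA DA 1 = \<tau> + s"
  using arrival_at_c rm_lt_c rm_pos by (simp add: tA_def)

lemma pathA_beyond_rm:
  assumes "0 < KA" "DA 0 = c" "\<tau> < t" "t \<le> \<tau> + s"
  shows "rm < pathA DA KA t"
proof -
  have "pathA DA KA t = (t - tA) * wA"
    using assms arrival_at_c rm_lt_c rm_pos tA_le_l0 l0_lt_\<tau> by (intro pathA_first_leg) auto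
  moreover have "(\<tau> - tA) * wA < (t - tA) * wA" using assms(3) wA_pos by simp
  ultimately show ?thesis using A_reaches_rm_at_\<tau> by simp
qed


definition zigzag :: "nat \<Rightarrow> real" where "zigzag k = (if k = 0 then c else rm)"

lemma startA_zigzag_1: "startA zigzag 1 = \<tau> + s"
  by (rule startA_1_overshoot) (simp add: zigzag_def)

lemma lookA_zigzag_1: "lookA zigzag 1 = \<tau> + s + WA 1"
  using startA_zigzag_1 by (simp add: cycle_look_def)

lemma startA_zigzag_2: "startA zigzag 2 = \<tau> + 2 * s + WA 1"
  using lookA_zigzag_1 rm_lt_c by (simp add: numeral_2_eq_2 zigzag_def s_def cycle_look_def)

lemma lookA_zigzag_2: "lookA zigzag 2 = \<tau> + 2 * s + WA 1 + WA 2"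
  using startA_zigzag_2 by (simp add: cycle_look_def)

lemma pathA_zigzag_at_c: "\<tau> + s \<le> t \<Longrightarrow> t \<le> \<tau> + s + WA 1 \<Longrightarrow> pathA zigzag 2 t = c"
  using A.trajectory_waiting[of 1 2 0 zigzag t] startA_zigzag_1 lookA_zigzag_1 by (simp add: zigzag_def)

lemma pathA_zigzag_back: "\<tau> + 2 * s + WA 1 \<le> t \<Longrightarrow> pathA zigzag 2 t = rm"
  using A.trajectory_settled[of 0 zigzag 2 t] startA_zigzag_2 by (simp add: numeral_2_eq_2 zigzag_def)

lemma pathA_zigzag_away:
  assumes "\<tau> < t" "t < \<tau> + 2 * s + WA 1"
  shows "pathA zigzag 2 t \<noteq> rm"
proof -
  consider "t \<le> \<tau> + s" | "\<tau> + s \<le> t" "t \<le> \<tau> + s + WA 1" | "\<tau> + s + WA 1 \<le> t" by linarith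
  then show ?thesis
  proof cases
    case 1
    then show ?thesis using pathA_beyond_rm[of 2 zigzag t] assms by (simp add: zigzag_def)
  next
    case 2
    then show ?thesis using pathA_zigzag_at_c rm_lt_c by simp
  next
    case 3
    have "t \<le> startA zigzag (Suc 1)" using startA_zigzag_2 assms by (simp add: numeral_2_eq_2)
    then have "pathA zigzag 2 t
        = originA zigzag 1 + ((t - lookA zigzag 1) * wA) *\<^sub>R sgn (zigzag 1 - originA zigzag 1)"
      using 3 lookA_zigzag_1 by (intro A.trajectory_moving) auto
    also have "\<dots> = c - (t - lookA zigzag 1) * wA" using rm_lt_c by (simp add: zigzag_def)
    finally have "pathA zigzag 2 t = c - (t - lookA zigzag 1) * wA" .
    moreover have "(t - lookA zigzag 1) * wA < s * wA" using assms lookA_zigzag_1 wA_pos by simp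
    ultimately show ?thesis using wA_pos by (simp add: s_def)
  qed
qed

end

context line_instance
begin

lemma gathers_on_line_if_B_looks_on_arrival:
  assumes early: "\<And>k. \<sigma> k < T" and instant: "WB (Suc j) = 0"
  shows gathers_on_line
proof -
  interpret interception \<alpha> wA wB WA WB "\<sigma> j"
    using early tA_le_tB tB_le_\<sigma> by unfold_locales (auto intro: order_trans)
  define DB :: "nat \<Rightarrow> real" where "DB k = (if k < j then 1 else rm)" for k
  have B_still: "lookB DB k = \<sigma> k" "originB DB k = 1" if "k \<le> j" for k
    using that cycle_look_cong[of k DB "\<lambda>_. 1"] cycle_origin_cong[of k DB "\<lambda>_. 1"]
    by (simp_all add: DB_def \<sigma>_def cycle_origin_const)
  have startB_Suc_j: "startB DB (Suc j) = \<tau>"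
    using B_still[of j] by (intro startB_after_interception) (simp_all add: DB_def)
  then have lookB_Suc_j: "lookB DB (Suc j) = \<tau>"
    using instant by (simp add: cycle_look_def)
  have pathB_late: "pathB DB (Suc j) t = rm" if "\<tau> \<le> t" for t
    using B.trajectory_settled[of 1 DB "Suc j" t] that startB_Suc_j by (simp add: DB_def)
  have pathB_at_tA: "pathB DB (Suc j) tA = 1"
    using pathB_initial tA_nonneg tA_le_tB by blast
  have "0 \<le> (1 - rm) / wA" using rm_lt_1 wA_pos by simp
  then have late_looks: "\<tau> \<le> lookA detour 1" "\<tau> \<le> lookA detour 2"
    using lookA_detour_1 lookA_detour_2 \<tau>_lt_T WA_nonneg[of 1] WA_nonneg[of 2] by auto
  have "meeting_run (range (coef \<alpha>)) WA wA 0 detour 2 (pathB DB (Suc j))"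
  proof (rule meeting_run_2I)
    show "pathA detour 2 (lookA detour 0) \<noteq> pathB DB (Suc j) (lookA detour 0)"
      using pathA_initial[of tA detour 2] pathB_at_tA tA_nonneg by (simp add: lookA_0)
    show "pathA detour 2 (lookA detour 1) \<noteq> pathB DB (Suc j) (lookA detour 1)"
      using pathA_detour_at_look_1 pathB_late late_looks rm_lt_1 by simp
    show "pathA detour 2 (lookA detour 2) = pathB DB (Suc j) (lookA detour 2)"
      using pathA_detour_at_look_2 pathB_late late_looks by simp
    show "\<exists>c\<in>range (coef \<alpha>).
        detour 0 = originA detour 0 + c *\<^sub>R (pathB DB (Suc j) (lookA detour 0) - originA detour 0)"
      using pathB_at_tA by (intro bexI[of _ 1] one_in_coefs) (simp add: lookA_0 detour_def)
    show "\<exists>c\<in>range (coef \<alpha>).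
        detour 1 = originA detour 1 + c *\<^sub>R (pathB DB (Suc j) (lookA detour 1) - originA detour 1)"
      using pathB_late late_looks by (intro bexI[of _ 1] one_in_coefs) (simp add: detour_def)
  qed
  moreover have "meeting_run (range (coef \<alpha>)) WB wB 1 DB (Suc j) (pathA detour 2)"
  proof (rule meeting_runI)
    fix k assume "k < Suc j"
    then have "pathB DB (Suc j) (\<sigma> k) = 1"
      using B.trajectory_waiting[of k "Suc j" 1 DB "\<sigma> k"] B_still[of k] B.cycle_start_le_look[of 1 DB k]
      by simp
    moreover have "pathA detour 2 (\<sigma> k) < 1"
      using pathA_below_one[of 2 detour "\<sigma> k"] early tA_nonneg tA_le_tB tB_le_\<sigma>[of k]
      by (simp add: detour_def)
    ultimately show "pathB DB (Suc j) (lookB DB k) \<noteq> pathA detour 2 (lookB DB k)"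
      using B_still[of k] \<open>k < Suc j\<close> by simp
  next
    show "pathB DB (Suc j) (lookB DB (Suc j)) = pathA detour 2 (lookB DB (Suc j))"
      using lookB_Suc_j pathB_late pathA_at_\<tau>[of 2 detour] rm_lt_1 by (simp add: detour_def)
  next
    fix k assume "k < Suc j"
    then consider "k < j" | "k = j" by linarith
    then show "\<exists>c\<in>range (coef \<alpha>). DB k = originB DB k + c *\<^sub>R (pathA detour 2 (lookB DB k) - originB DB k)"
    proof cases
      case 1
      then show ?thesis using B_still[of k] by (intro bexI[of _ 0] zero_in_coefs) (simp add: DB_def)
    next
      case 2
      then show ?thesis using B_still[of j] pathA_at_l0[of 2 detour] rm_lt_1
        by (intro bexI[of _ \<kappa>] \<kappa>_in_coefs) (simp add: DB_def detour_def rm_def)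
    qed
  qed
  ultimately show ?thesis unfolding gathers_on_line_def by blast
qed

lemma gathers_on_line_if_B_waits_long:
  assumes early: "\<And>k. \<sigma> k < T" and patient: "\<And>k. 0 < WB (Suc k)" and long: "WA 1 < \<sigma> n - tB"
  shows gathers_on_line
proof -
  interpret interception \<alpha> wA wB WA WB tB
    using early[of 0] \<sigma>_0 tA_le_tB by unfold_locales auto
  obtain c where c: "c \<in> range (coef \<alpha>)" "rm < c" "c < rm + wA * ((\<sigma> n - tB - WA 1) / 2)"
    using coefs_dense[of rm "rm + wA * ((\<sigma> n - tB - WA 1) / 2)" \<alpha>] rm_pos long wA_pos by auto
  interpret overshoot \<alpha> wA wB WA WB tB c
    using c(2) by unfold_locales
  define e where "e = \<tau> + 2 * s + WA 1"
  define DB :: "nat \<Rightarrow> real" where "DB = (\<lambda>_. rm)"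
  have startB_1: "startB DB 1 = \<tau>"
    using startB_after_interception[of DB 0] by (simp add: DB_def lookB_0)
  have pathB_late: "pathB DB K t = rm" if "0 < K" "\<tau> \<le> t" for K t
    using pathB_after_first_move[of K rm t] that startB_1 by (simp add: DB_def)
  have lookB_Suc: "lookB DB (Suc k) = \<tau> + (\<sigma> (Suc k) - tB)" for k
    using lookB_after_first_move[of rm k] startB_1 by (simp add: DB_def)
  have lookB_after_\<tau>: "\<tau> < lookB DB (Suc k)" for k
    using lookB_Suc[of k] \<sigma>_mono[of 1 "Suc k"] \<sigma>_Suc[of 0] \<sigma>_0 patient[of 0] by simp
  have short_detour: "2 * s + WA 1 \<le> \<sigma> n - tB"
    using c(3) wA_pos by (simp add: s_def field_simps)
  obtain n' where "n = Suc n'" using long \<sigma>_0 WA_nonneg[of 1] by (cases n) auto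
  then have "e \<le> lookB DB n" using lookB_Suc short_detour by (simp add: e_def)
  define nB where "nB = (LEAST m. e \<le> lookB DB m)"
  have nB: "e \<le> lookB DB nB" "\<And>m. m < nB \<Longrightarrow> lookB DB m < e"
    unfolding nB_def using \<open>e \<le> lookB DB n\<close> by (auto intro: LeastI dest: not_less_Least)
  have "0 < nB"
    using nB(1) lookB_0 l0_lt_\<tau> s_pos WA_nonneg[of 1] by (cases nB) (auto simp: e_def)
  have pathB_at_tA: "pathB DB nB tA = 1"
    using pathB_initial tA_nonneg tA_le_tB by blast
  have look_1: "\<tau> + s \<le> lookA zigzag 1" "lookA zigzag 1 \<le> \<tau> + s + WA 1"
    using lookA_zigzag_1 WA_nonneg[of 1] by simp_all
  have "meeting_run (range (coef \<alpha>)) WA wA 0 zigzag 2 (pathB DB nB)"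
  proof (rule meeting_run_2I)
    show "pathA zigzag 2 (lookA zigzag 0) \<noteq> pathB DB nB (lookA zigzag 0)"
      using pathA_initial[of tA zigzag 2] pathB_at_tA tA_nonneg by (simp add: lookA_0)
    show "pathA zigzag 2 (lookA zigzag 1) \<noteq> pathB DB nB (lookA zigzag 1)"
      using pathA_zigzag_at_c look_1 pathB_late[OF \<open>0 < nB\<close>] s_pos rm_lt_c by simp
    show "pathA zigzag 2 (lookA zigzag 2) = pathB DB nB (lookA zigzag 2)"
      using pathA_zigzag_back pathB_late[OF \<open>0 < nB\<close>] lookA_zigzag_2 WA_nonneg s_pos by simp
    show "\<exists>c\<in>range (coef \<alpha>).
        zigzag 0 = originA zigzag 0 + c *\<^sub>R (pathB DB nB (lookA zigzag 0) - originA zigzag 0)"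
      using pathB_at_tA c(1) by (intro bexI[of _ c]) (simp_all add: lookA_0 zigzag_def)
    show "\<exists>c\<in>range (coef \<alpha>).
        zigzag 1 = originA zigzag 1 + c *\<^sub>R (pathB DB nB (lookA zigzag 1) - originA zigzag 1)"
      using pathB_late[OF \<open>0 < nB\<close>] look_1 s_pos
      by (intro bexI[of _ 1] one_in_coefs) (simp add: zigzag_def)
  qed
  moreover have "meeting_run (range (coef \<alpha>)) WB wB 1 DB nB (pathA zigzag 2)"
  proof (rule meeting_runI)
    fix k assume "k < nB"
    show "pathB DB nB (lookB DB k) \<noteq> pathA zigzag 2 (lookB DB k)"
    proof (cases k)
      case 0
      then show ?thesis
        using pathB_initial[of tB DB nB] pathA_at_l0[of 2 zigzag] rp_lt_1 rm_lt_c tA_nonneg tA_le_tB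
        by (simp add: lookB_0 zigzag_def)
    next
      case (Suc k')
      then show ?thesis
        using pathB_late[OF \<open>0 < nB\<close>] pathA_zigzag_away lookB_after_\<tau>[of k'] nB(2) \<open>k < nB\<close>
        by (force simp: e_def)
    qed
  next
    obtain n' where "nB = Suc n'" using \<open>0 < nB\<close> gr0_implies_Suc by blast
    then show "pathB DB nB (lookB DB nB) = pathA zigzag 2 (lookB DB nB)"
      using pathB_late[OF \<open>0 < nB\<close>] pathA_zigzag_back nB(1) lookB_after_\<tau>[of n'] by (simp add: e_def)
  next
    fix k assume "k < nB"
    show "\<exists>c\<in>range (coef \<alpha>). DB k = originB DB k + c *\<^sub>R (pathA zigzag 2 (lookB DB k) - originB DB k)"
    proof (cases k)
      case 0
      then show ?thesis
        using pathA_at_l0[of 2 zigzag] rm_lt_c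
        by (intro bexI[of _ \<kappa>] \<kappa>_in_coefs) (simp add: lookB_0 zigzag_def DB_def rm_def)
    next
      case (Suc k')
      then show ?thesis by (intro bexI[of _ 0] zero_in_coefs) (simp add: DB_def)
    qed
  qed
  ultimately show ?thesis unfolding gathers_on_line_def by blast
qed

lemma gathers_on_line_if_A_waits_long:
  assumes early: "\<And>k. \<sigma> k < T" and patient: "\<And>k. 0 < WB (Suc k)" and short: "\<And>n. \<sigma> n - tB \<le> WA 1"
  shows gathers_on_line
proof -
  interpret interception \<alpha> wA wB WA WB tB
    using early[of 0] \<sigma>_0 tA_le_tB by unfold_locales auto
  have "\<sigma> 2 = tB + WB 1 + WB 2" using \<sigma>_Suc[of 0] \<sigma>_Suc[of 1] \<sigma>_0 by (simp add: numeral_2_eq_2)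
  then have WB_1_lt: "WB 1 < WA 1" using short[of 2] patient[of 1] by (simp add: numeral_2_eq_2)
  define smax where "smax = min (WB 1) ((WA 1 - WB 1) * wB / wA)"
  have "0 < smax" using patient[of 0] WB_1_lt wA_pos wB_pos by (simp add: smax_def)
  then obtain c where c: "c \<in> range (coef \<alpha>)" "rm < c" "c < rm + wA * smax"
    using coefs_dense[of rm "rm + wA * smax" \<alpha>] rm_pos wA_pos by auto
  interpret overshoot \<alpha> wA wB WA WB tB c
    using c(2) by unfold_locales
  have "s < smax" using c(3) wA_pos by (simp add: s_def field_simps)
  then have s_le: "s \<le> WB 1" "s * wA / wB \<le> WA 1 - WB 1"
    using wA_pos wB_pos by (auto simp: smax_def field_simps)
  define DB :: "nat \<Rightarrow> real" where "DB k = (if k = 0 then rm else c)" for k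
  define l1 where "l1 = \<tau> + WB 1"
  define e where "e = l1 + s * wA / wB"
  have "0 \<le> s * wA / wB" using s_pos wA_pos wB_pos by simp
  then have e_between: "\<tau> + s \<le> e" "e \<le> \<tau> + s + WA 1"
    using s_le s_pos by (simp_all add: e_def l1_def)
  have startA_1: "startA (\<lambda>_. c) 1 = \<tau> + s" by (rule startA_1_overshoot) simp
  then have lookA_1: "lookA (\<lambda>_. c) 1 = \<tau> + s + WA 1" by (simp add: cycle_look_def)
  have pathA_c: "pathA (\<lambda>_. c) 1 t = c" if "\<tau> + s \<le> t" for t
    using A.trajectory_settled[of 0 "\<lambda>_. c" 1 t] startA_1 that by simp
  have startB_1: "startB DB 1 = \<tau>"
    using startB_after_interception[of DB 0] by (simp add: DB_def lookB_0)
  then have lookB_1: "lookB DB 1 = l1" by (simp add: cycle_look_def l1_def)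
  have startB_2: "startB DB 2 = e"
    using lookB_1 rm_lt_c wA_pos by (simp add: numeral_2_eq_2 DB_def e_def s_def cycle_look_def)
  then have lookB_2: "lookB DB 2 = e + WB 2" by (simp add: cycle_look_def)
  have pathB_c: "pathB DB 2 t = c" if "e \<le> t" for t
    using B.trajectory_settled[of 1 DB 2 t] startB_2 that by (simp add: numeral_2_eq_2 DB_def)
  have pathB_l1: "pathB DB 2 l1 = rm"
    using B.trajectory_waiting[of 1 2 1 DB l1] startB_1 lookB_1 patient[of 0] by (simp add: DB_def l1_def)
  have "meeting_run (range (coef \<alpha>)) WA wA 0 (\<lambda>_. c) 1 (pathB DB 2)"
  proof (rule meeting_runI)
    show "pathA (\<lambda>_. c) 1 (lookA (\<lambda>_. c) k) \<noteq> pathB DB 2 (lookA (\<lambda>_. c) k)" if "k < 1" for k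
      using that pathA_initial[of tA "\<lambda>_. c" 1] pathB_initial[of tA DB 2] tA_nonneg tA_le_tB
      by (simp add: lookA_0)
    show "pathA (\<lambda>_. c) 1 (lookA (\<lambda>_. c) 1) = pathB DB 2 (lookA (\<lambda>_. c) 1)"
      using lookA_1 pathA_c pathB_c e_between WA_nonneg[of 1] by simp
    show "\<exists>c'\<in>range (coef \<alpha>).
        c = originA (\<lambda>_. c) k + c' *\<^sub>R (pathB DB 2 (lookA (\<lambda>_. c) k) - originA (\<lambda>_. c) k)"
      if "k < 1" for k
      using that pathB_initial[of tA DB 2] tA_nonneg tA_le_tB c(1)
      by (intro bexI[of _ c]) (simp_all add: lookA_0)
  qed
  moreover have "meeting_run (range (coef \<alpha>)) WB wB 1 DB 2 (pathA (\<lambda>_. c) 1)"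
  proof (rule meeting_run_2I)
    show "pathB DB 2 (lookB DB 0) \<noteq> pathA (\<lambda>_. c) 1 (lookB DB 0)"
      using pathB_initial[of tB DB 2] pathA_at_l0[of 1 "\<lambda>_. c"] rp_lt_1 rm_lt_c tA_nonneg tA_le_tB
      by (simp add: lookB_0)
    show "pathB DB 2 (lookB DB 1) \<noteq> pathA (\<lambda>_. c) 1 (lookB DB 1)"
      using lookB_1 pathB_l1 pathA_c[of l1] s_le rm_lt_c by (simp add: l1_def)
    show "pathB DB 2 (lookB DB 2) = pathA (\<lambda>_. c) 1 (lookB DB 2)"
      using pathB_c pathA_c e_between lookB_2 WB_nonneg[of 2] by simp
    show "\<exists>c'\<in>range (coef \<alpha>).
        DB 0 = originB DB 0 + c' *\<^sub>R (pathA (\<lambda>_. c) 1 (lookB DB 0) - originB DB 0)"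
      using pathA_at_l0[of 1 "\<lambda>_. c"] rm_lt_c
      by (intro bexI[of _ \<kappa>] \<kappa>_in_coefs) (simp add: lookB_0 DB_def rm_def)
    show "\<exists>c'\<in>range (coef \<alpha>).
        DB 1 = originB DB 1 + c' *\<^sub>R (pathA (\<lambda>_. c) 1 (lookB DB 1) - originB DB 1)"
      using lookB_1 pathA_c[of l1] s_le
      by (intro bexI[of _ 1] one_in_coefs) (simp add: DB_def l1_def)
  qed
  ultimately show ?thesis unfolding gathers_on_line_def by blast
qed

lemma gathers_on_line: gathers_on_line
proof (cases "\<exists>j. T \<le> \<sigma> j")
  case True
  then show ?thesis using gathers_on_line_if_B_waits_past_T by blast
next
  case False
  then have early: "\<And>k. \<sigma> k < T" by (simp add: not_le)
  show ?thesis
  proof (cases "\<exists>j. WB (Suc j) = 0")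
    case True
    then show ?thesis using gathers_on_line_if_B_looks_on_arrival early by blast
  next
    case False
    then have patient: "\<And>k. 0 < WB (Suc k)" using WB_nonneg by (metis less_eq_real_def)
    show ?thesis
      using gathers_on_line_if_B_waits_long[OF early patient]
        gathers_on_line_if_A_waits_long[OF early patient] by (meson not_le)
  qed
qed

end

definition line_point :: "complex \<Rightarrow> complex \<Rightarrow> real \<Rightarrow> complex" where
  "line_point a u r = a + of_real r * u"

lemma line_point_diff: "line_point a u x - line_point a u y = of_real (x - y) * u"
  by (simp add: line_point_def algebra_simps)

lemma line_point_inj: "u \<noteq> 0 \<Longrightarrow> line_point a u x = line_point a u y \<longleftrightarrow> x = y"
  by (simp add: line_point_def)

lemma line_point_affine:
  "line_point a u (x + c * (y - x)) = line_point a u x + c *\<^sub>R (line_point a u y - line_point a u x)"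
  by (simp add: line_point_def scaleR_conv_of_real algebra_simps)

lemma line_point_move:
  assumes "u \<noteq> 0"
  shows "line_point a u x + s *\<^sub>R sgn (line_point a u d - line_point a u x)
    = line_point a u (x + s / cmod u * sgn (d - x))"
proof -
  have "sgn (line_point a u d - line_point a u x) = of_real (sgn (d - x)) * sgn u"
    by (simp only: line_point_diff sgn_mult sgn_of_real)
  also have "sgn u = u / of_real (cmod u)"
    by (simp add: sgn_div_norm scaleR_conv_of_real divide_inverse mult.commute)
  finally show ?thesis using assms by (simp add: line_point_def scaleR_conv_of_real algebra_simps)
qed

context
  fixes a u :: complex
  assumes u: "u \<noteq> 0"
begin

lemma cycle_origin_line_point:
  "cycle_origin (line_point a u r0) (\<lambda>k. line_point a u (D k)) k = line_point a u (cycle_origin r0 D k)"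
  by (cases k) simp_all

lemma cycle_start_line_point:
  "cycle_start W v (line_point a u r0) (\<lambda>k. line_point a u (D k)) k = cycle_start W (v / cmod u) r0 D k"
proof (induction k)
  case (Suc k)
  have "cmod (line_point a u (D k) - line_point a u (cycle_origin r0 D k)) / v
      = \<bar>D k - cycle_origin r0 D k\<bar> / (v / cmod u)"
    by (simp only: line_point_diff norm_mult norm_of_real) (simp add: u)
  then show ?case using Suc by (simp add: cycle_origin_line_point)
qed simp

lemma cycle_look_line_point:
  "cycle_look W v (line_point a u r0) (\<lambda>k. line_point a u (D k)) k = cycle_look W (v / cmod u) r0 D k"
  by (simp add: cycle_look_def cycle_start_line_point)

lemma trajectory_line_point:
  "trajectory W v (line_point a u r0) (\<lambda>k. line_point a u (D k)) K t
    = line_point a u (trajectory W (v / cmod u) r0 D K t)"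
proof (induction K)
  case (Suc K)
  then show ?case
    unfolding trajectory.simps(2) cycle_start_line_point cycle_look_line_point cycle_origin_line_point
    by (simp add: line_point_move[OF u])
qed simp

lemma meeting_run_line_point:
  assumes "meeting_run C W (v / cmod u) r0 D K \<rho>"
  shows "meeting_run C W v (line_point a u r0) (\<lambda>k. line_point a u (D k)) K (\<lambda>t. line_point a u (\<rho> t))"
proof -
  have move: "\<exists>c\<in>C. line_point a u y = line_point a u x + c *\<^sub>R (line_point a u z - line_point a u x)"
    if "\<exists>c\<in>C. y = x + c *\<^sub>R (z - x)" for x y z :: real
    using that by (auto simp: line_point_affine)
  show ?thesis
    using assms move
    unfolding meeting_run_def trajectory_line_point cycle_look_line_point cycle_origin_line_point
      line_point_inj[OF u]
    by blast
qed

end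

definition coef_of_bits :: "real \<Rightarrow> (nat \<Rightarrow> bool) \<Rightarrow> real" where
  "coef_of_bits \<alpha> bits = coef \<alpha> (LEAST n. \<not> bits n)"

text \<open>Each value coef \<alpha> m is chosen with probability 2^-(m+1).\<close>
definition gather_alg :: "real \<Rightarrow> complex \<Rightarrow> complex \<Rightarrow> (nat \<Rightarrow> bool) \<Rightarrow> complex"
where
  "gather_alg \<alpha> own other bits = own + of_real (coef_of_bits \<alpha> bits) * (other - own)"

lemma coef_of_bits_eq:
  assumes "\<And>n. n < m \<Longrightarrow> bits n" "\<not> bits m"
  shows "coef_of_bits \<alpha> bits = coef \<alpha> m"
proof -
  have "(LEAST n. \<not> bits n) = m"
    by (rule Least_equality) (use assms in \<open>auto simp: not_less[symmetric]\<close>)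
  then show ?thesis by (simp add: coef_of_bits_def)
qed

lemma gather_alg_similarity:
  assumes "similarity f"
  shows "inv f (gather_alg \<alpha> (f x) (f y) bits) = x + of_real (coef_of_bits \<alpha> bits) * (y - x)"
proof -
  from assms obtain a b where "a \<noteq> 0" and f: "f = (\<lambda>z. a * z + b) \<or> f = (\<lambda>z. a * cnj z + b)"
    unfolding similarity_def by blast
  then have "inj f" by (auto simp: inj_def)
  moreover have "gather_alg \<alpha> (f x) (f y) bits = f (x + of_real (coef_of_bits \<alpha> bits) * (y - x))"
    using f by (auto simp: gather_alg_def algebra_simps)
  ultimately show ?thesis by simp
qed

lemma coin_cylinder_eq:
  "{\<omega>. \<forall>j\<in>J. \<omega> j = \<beta> j} =
     prod_emb UNIV (\<lambda>_. measure_pmf (bernoulli_pmf (1/2))) J (Pi\<^sub>E J (\<lambda>j. {\<beta> j}))"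
  by (simp add: set_eq_iff prod_emb_iff restrict_PiE_iff Pi_iff)

lemma coin_cylinder_sets: "finite J \<Longrightarrow> {\<omega>. \<forall>j\<in>J. \<omega> j = \<beta> j} \<in> sets coin_space"
  unfolding coin_space_def coin_cylinder_eq by (rule sets_PiM_I) auto

lemma coin_cylinder_positive:
  assumes "finite J"
  shows "0 < emeasure coin_space {\<omega>. \<forall>j\<in>J. \<omega> j = \<beta> j}"
proof -
  have "emeasure coin_space {\<omega>. \<forall>j\<in>J. \<omega> j = \<beta> j}
      = (\<Prod>j\<in>J. emeasure (measure_pmf (bernoulli_pmf (1/2))) {\<beta> j})"
    unfolding coin_space_def coin_cylinder_eq
    by (rule emeasure_PiM_emb) (auto simp: assms prob_space_measure_pmf)
  also have "\<dots> = inverse ((2::ennreal) ^ card J)"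
    by (simp add: emeasure_pmf_single ennreal_inverse_power)
  finally show ?thesis by (simp add: ennreal_inverse_positive power_eq_top_ennreal)
qed

lemma gathers_of_meeting_runs:
  fixes P :: "bool \<Rightarrow> real \<Rightarrow> complex"
  assumes motion: "\<And>i. motion (W i) (v i)"
    and P: "\<And>i. P i = trajectory (W i) (v i) (x0 i) (D i) (K i)"
    and runs: "\<And>i. meeting_run C (W i) (v i) (x0 i) (D i) (K i) (P (\<not> i))"
    and moves: "\<And>i k. k < K i \<Longrightarrow> D i k = inv (fr i) (alg (fr i (cycle_origin (x0 i) (D i) k))
                   (fr i (P (\<not> i) (cycle_look (W i) (v i) (x0 i) (D i) k))) (\<lambda>n. \<omega> (i, k, n)))"
  shows "gathers alg fr v W x0 \<omega>"
proof -
  define X where "X i = cycle_origin (x0 i) (D i)" for i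
  define S where "S i = cycle_start (W i) (v i) (x0 i) (D i)" for i
  define L where "L i = cycle_look (W i) (v i) (x0 i) (D i)" for i
  define H where "H = max (L True (K True)) (L False (K False)) + 1"
  have H: "L i (K i) < H" for i by (cases i) (auto simp: H_def)
  have meet: "P i (L i (K i)) = P (\<not> i) (L i (K i))"
    and apart: "\<And>k. k < K i \<Longrightarrow> P i (L i k) \<noteq> P (\<not> i) (L i k)" for i
    using runs[of i] by (simp_all add: meeting_run_def P L_def)
  have active: "k \<le> K i" if "\<forall>k'<k. P i (L i k') \<noteq> P (\<not> i) (L i k')" for i k
    using that meet by (meson not_le)
  have first_meet: "k = K i"
    if "\<forall>k'<k. P i (L i k') \<noteq> P (\<not> i) (L i k')" "P i (L i k) = P (\<not> i) (L i k)" for i k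
    using active[OF that(1)] apart that(2) by (meson le_neq_implies_less)
  have before_meet: "k < K i"
    if "\<forall>k'<k. P i (L i k') \<noteq> P (\<not> i) (L i k')" "P i (L i k) \<noteq> P (\<not> i) (L i k)" for i k
    using active[OF that(1)] meet that(2) by (metis le_neq_implies_less)
  have wait: "P i t = X i k" if "k \<le> K i" "S i k \<le> t" "t \<le> L i k" for i k t
    using motion.trajectory_waiting[OF motion that[unfolded S_def L_def]] by (simp add: P X_def)
  have halt: "P i t = X i (K i)" if "L i (K i) \<le> t" for i t
    using motion.trajectory_after_look[OF motion that[unfolded L_def]] by (simp add: P X_def)
  have move: "P i t = X i k + of_real ((t - L i k) * v i) * sgn (D i k - X i k)"
    if "k < K i" "L i k \<le> t" "t \<le> S i (Suc k)" for i k t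
    using motion.trajectory_moving[OF motion that[unfolded S_def L_def]]
    by (simp add: P X_def L_def scaleR_conv_of_real)
  have "exec_prefix alg fr v W x0 \<omega> H P D"
    unfolding exec_prefix_def startpos_eq_cycle_origin cstart_eq_cycle_start look_time_eq_cycle_look
      Let_def X_def[symmetric] S_def[symmetric] L_def[symmetric]
  proof (intro allI conjI impI)
    fix i k t
    assume "\<forall>k'<k. P i (L i k') \<noteq> P (\<not> i) (L i k')" "S i k \<le> t \<and> t \<le> L i k \<and> t < H"
    then show "P i t = X i k" using wait active by blast
  next
    fix i k t
    assume "(\<forall>k'<k. P i (L i k') \<noteq> P (\<not> i) (L i k')) \<and> L i k < H \<and> P i (L i k) = P (\<not> i) (L i k)"
      "L i k \<le> t \<and> t < H"
    then show "P i t = X i k" using halt first_meet by blast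
  next
    fix i k
    assume "(\<forall>k'<k. P i (L i k') \<noteq> P (\<not> i) (L i k')) \<and> L i k < H \<and> P i (L i k) \<noteq> P (\<not> i) (L i k)"
    then show "D i k = inv (fr i) (alg (fr i (X i k)) (fr i (P (\<not> i) (L i k))) (\<lambda>n. \<omega> (i, k, n)))"
      using moves before_meet by (simp add: X_def L_def)
  next
    fix i k t
    assume "(\<forall>k'<k. P i (L i k') \<noteq> P (\<not> i) (L i k')) \<and> L i k < H \<and> P i (L i k) \<noteq> P (\<not> i) (L i k)"
      "L i k \<le> t \<and> t \<le> S i (Suc k) \<and> t < H"
    then show "P i t = X i k + of_real ((t - L i k) * v i) * sgn (D i k - X i k)"
      using move before_meet by blast
  next
    fix i
    show "(\<exists>k. (\<forall>k'<k. P i (L i k') \<noteq> P (\<not> i) (L i k')) \<and> L i k < H \<and>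
          P i (L i k) = P (\<not> i) (L i k))
      \<or> (\<exists>k. H \<le> S i k)"
      using apart meet H by blast
  qed
  moreover have "\<exists>k. (\<forall>k'<k. P i (L i k') \<noteq> P (\<not> i) (L i k')) \<and> L i k < H \<and>
      P i (L i k) = P (\<not> i) (L i k)" for i
    using apart meet H by blast
  ultimately show ?thesis
    unfolding gathers_def Let_def look_time_eq_cycle_look L_def by blast
qed

lemma gathering_has_positive_probability:
  assumes sim: "\<And>i. similarity (fr i)" and motion: "\<And>i. motion (W i) (v i)"
    and runs: "\<And>i. meeting_run (range (coef \<alpha>)) (W i) (v i) (x0 i) (D i) (K i)
                 (trajectory (W (\<not> i)) (v (\<not> i)) (x0 (\<not> i)) (D (\<not> i)) (K (\<not> i)))"
  shows "\<exists>A\<in>sets coin_space.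
    A \<subseteq> {\<omega>. gathers (gather_alg \<alpha>) fr v W x0 \<omega>} \<and> 0 < emeasure coin_space A"
proof -
  define P where "P i = trajectory (W i) (v i) (x0 i) (D i) (K i)" for i
  define X where "X i = cycle_origin (x0 i) (D i)" for i
  define L where "L i = cycle_look (W i) (v i) (x0 i) (D i)" for i
  have "\<forall>i k. \<exists>n. k < K i \<longrightarrow> D i k = X i k + of_real (coef \<alpha> n) * (P (\<not> i) (L i k) - X i k)"
    using runs unfolding meeting_run_def P_def X_def L_def by (metis rangeE scaleR_conv_of_real)
  then obtain ch where ch: "\<And>i k. k < K i \<Longrightarrow>
      D i k = X i k + of_real (coef \<alpha> (ch i k)) * (P (\<not> i) (L i k) - X i k)"
    by metis
  define J where "J = (\<Union>i. \<Union>k\<in>{..<K i}. (\<lambda>n. (i, k, n)) ` {..ch i k})"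
  define \<beta> where "\<beta> = (\<lambda>(i, k, n). n < ch i k)"
  define A where "A = {\<omega>. \<forall>j\<in>J. \<omega> j = \<beta> j}"
  have "finite J" unfolding J_def by auto
  have "A \<subseteq> {\<omega>. gathers (gather_alg \<alpha>) fr v W x0 \<omega>}"
  proof
    fix \<omega> assume "\<omega> \<in> A"
    then have "coef_of_bits \<alpha> (\<lambda>n. \<omega> (i, k, n)) = coef \<alpha> (ch i k)" if "k < K i" for i k
      by (intro coef_of_bits_eq) (use that in \<open>auto simp: A_def J_def \<beta>_def\<close>)
    then have moves:
      "D i k = inv (fr i) (gather_alg \<alpha> (fr i (X i k)) (fr i (P (\<not> i) (L i k))) (\<lambda>n. \<omega> (i, k, n)))"
      if "k < K i" for i k
      using ch[OF that] gather_alg_similarity[OF sim] that by simp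
    show "\<omega> \<in> {\<omega>. gathers (gather_alg \<alpha>) fr v W x0 \<omega>}"
      using gathers_of_meeting_runs[of W v P x0 D K "range (coef \<alpha>)" fr "gather_alg \<alpha>" \<omega>,
          OF motion P_def runs[folded P_def]] moves
      by (simp add: X_def L_def)
  qed
  moreover have "A \<in> sets coin_space" "0 < emeasure coin_space A"
    unfolding A_def using \<open>finite J\<close> by (simp_all add: coin_cylinder_sets coin_cylinder_positive)
  ultimately show ?thesis by blast
qed

lemma plane_meeting_runs:
  fixes x0 :: "bool \<Rightarrow> complex"
  assumes \<alpha>: "\<alpha> > 0" and v: "\<And>i. v i > 0" and speed: "v True = \<alpha> * v False \<or> v False = \<alpha> * v True"
    and W: "\<And>i k. W i k \<ge> 0"
  shows "\<exists>D K. \<forall>i. meeting_run (range (coef \<alpha>)) (W i) (v i) (x0 i) (D i) (K i)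
                 (trajectory (W (\<not> i)) (v (\<not> i)) (x0 (\<not> i)) (D (\<not> i)) (K (\<not> i)))"
proof (cases "x0 True = x0 False")
  case True
  have runs: "meeting_run (range (coef \<alpha>)) (W i) (v i) (x0 i) (\<lambda>_. x0 i) 0
      (trajectory (W (\<not> i)) (v (\<not> i)) (x0 (\<not> i)) (\<lambda>_. x0 (\<not> i)) 0)" for i
    using True by (cases i) (simp_all add: meeting_run_def)
  show ?thesis by (rule exI[of _ "\<lambda>i _. x0 i"], rule exI[of _ "\<lambda>_. 0"]) (simp add: runs)
next
  case False
  define i0 where "i0 = (W True 0 \<le> W False 0)"
  define a where "a = x0 i0"
  define u where "u = x0 (\<not> i0) - x0 i0"
  have u: "u \<noteq> 0" using False by (cases i0) (auto simp: u_def)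
  have x0: "x0 i0 = line_point a u 0" "x0 (\<not> i0) = line_point a u 1"
    by (simp_all add: line_point_def a_def u_def)
  have traj: "trajectory W' v' (line_point a u r0) (\<lambda>k. line_point a u (D k)) K
      = (\<lambda>t. line_point a u (trajectory W' (v' / cmod u) r0 D K t))" for W' v' r0 D K
    by (rule ext) (rule trajectory_line_point[OF u])
  interpret line_instance \<alpha> "v i0 / cmod u" "v (\<not> i0) / cmod u" "W i0" "W (\<not> i0)"
  proof
    show "W i0 0 \<le> W (\<not> i0) 0" by (cases "W True 0 \<le> W False 0") (auto simp: i0_def)
    show "v (\<not> i0) / cmod u = \<alpha> * (v i0 / cmod u) \<or> v i0 / cmod u = \<alpha> * (v (\<not> i0) / cmod u)"
      using speed by (cases i0) auto
  qed (use \<alpha> v W u in auto)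
  obtain DA KA DB KB where
    runA: "meeting_run (range (coef \<alpha>)) (W i0) (v i0 / cmod u) 0 DA KA (pathB DB KB)" and
    runB: "meeting_run (range (coef \<alpha>)) (W (\<not> i0)) (v (\<not> i0) / cmod u) 1 DB KB (pathA DA KA)"
    using gathers_on_line unfolding gathers_on_line_def by blast
  define D where "D i = (\<lambda>k. line_point a u (if i = i0 then DA k else DB k))" for i
  define K where "K i = (if i = i0 then KA else KB)" for i
  have "meeting_run (range (coef \<alpha>)) (W i) (v i) (x0 i) (D i) (K i)
      (trajectory (W (\<not> i)) (v (\<not> i)) (x0 (\<not> i)) (D (\<not> i)) (K (\<not> i)))" for i
  proof (cases "i = i0")
    case True
    then show ?thesis
      using meeting_run_line_point[OF u runA] by (simp add: x0 D_def K_def traj)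
  next
    case False
    then have "i = (\<not> i0)" by blast
    then show ?thesis
      using meeting_run_line_point[OF u runB] by (simp add: x0 D_def K_def traj)
  qed
  then show ?thesis by blast
qed

theorem theorem2:
  fixes \<alpha> :: real
  assumes "\<alpha> > 0"
  shows "\<exists>alg :: complex \<Rightarrow> complex \<Rightarrow> (nat \<Rightarrow> bool) \<Rightarrow> complex.
    \<forall>(v :: bool \<Rightarrow> real) (fr :: bool \<Rightarrow> complex \<Rightarrow> complex) (x0 :: bool \<Rightarrow> complex)
      (W :: bool \<Rightarrow> nat \<Rightarrow> real).
      (\<forall>i. v i > 0) \<and> (v True = \<alpha> * v False \<or> v False = \<alpha> * v True) \<and>
      (\<forall>i. similarity (fr i)) \<and> (\<forall>i k. W i k \<ge> 0) \<longrightarrow>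
      (\<exists>A \<in> sets coin_space. A \<subseteq> {\<omega>. gathers alg fr v W x0 \<omega>} \<and>
         emeasure coin_space A > 0)"
proof (intro exI[of _ "gather_alg \<alpha>"] allI impI)
  fix v :: "bool \<Rightarrow> real" and fr :: "bool \<Rightarrow> complex \<Rightarrow> complex"
    and x0 :: "bool \<Rightarrow> complex" and W :: "bool \<Rightarrow> nat \<Rightarrow> real"
  assume "(\<forall>i. v i > 0) \<and> (v True = \<alpha> * v False \<or> v False = \<alpha> * v True) \<and>
      (\<forall>i. similarity (fr i)) \<and> (\<forall>i k. W i k \<ge> 0)"
  then have v: "\<And>i. v i > 0" and speed: "v True = \<alpha> * v False \<or> v False = \<alpha> * v True"
    and sim: "\<And>i. similarity (fr i)" and W: "\<And>i k. W i k \<ge> 0"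
    by auto
  obtain D K where runs: "\<And>i. meeting_run (range (coef \<alpha>)) (W i) (v i) (x0 i) (D i) (K i)
      (trajectory (W (\<not> i)) (v (\<not> i)) (x0 (\<not> i)) (D (\<not> i)) (K (\<not> i)))"
    using plane_meeting_runs[OF assms v speed, where W = W] W by blast
  have motion: "motion (W i) (v i)" for i
    using v W by unfold_locales
  show "\<exists>A\<in>sets coin_space. A \<subseteq> {\<omega>. gathers (gather_alg \<alpha>) fr v W x0 \<omega>} \<and>
      0 < emeasure coin_space A"
    by (intro gathering_has_positive_probability[where D = D and K = K] sim motion runs)
qed

end
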